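(* In the relatively free algebra $R=\mathbb{K}\langle Y\cup Z\rangle/I$, the image of every $Y$-proper polynomial is a linear combination of the images of polynomials $g_K=h(y_{i_1},\dots,y_{i_{2m+n}},z_{j_1},\dots,z_{j_{n+2r}})\,z_{k_1}\cdots z_{k_q}$ with $m,n,r,q\ge0$, $i_1<i_2<\dots<i_{2m+n}$, $j_1\le\dots\le j_{n+2r}$ and $k_1<\dots<k_q$.
   Context: $\mathbb{K}$ is an infinite field of characteristic different from $2$. $\mathbb{K}\langle Y\cup Z\rangle$ is the free associative algebra on disjoint countable sets $Y=\{y_1,y_2,\dots\}$ (degree $0$) and $Z=\{z_1,z_2,\dots\}$ (degree $1$). Notation: $[a,b]=ab-ba$, $[a_1,\dots,a_n]=[[a_1,\dots,a_{n-1}],a_n]$, $a\circ b=ab+ba$. A polynomial is $Y$-proper if it lies in the subalgebra of $\mathbb{K}\langle Y\cup Z\rangle$ generated by $Z$ and all commutators $[x_1,\dots,x_s]$, $s\ge2$, of variables $x_i\in Y\cup Z$. A $T_2$-ideal is an ideal of $\mathbb{K}\langle Y\cup Z\rangle$ stable under all graded endomorphisms (those sending each $y_i$ to a polynomial of degree $0$ and each $z_i$ to one of degree $1$). $I$ is the $T_2$-ideal generated by: (1) $[y_1,y_2,y_3]$, $[y_1,y_2,z_3]$; (2) $[y_1,z_2,y_3]$; (3) $[y_1,z_2]\circ z_3$; (4) $[z_1\circ z_2,z_3]$; (5) $(z_1\circ z_2)(z_3\circ z_4)-(z_1\circ z_3)(z_2\circ z_4)$; (6) $[x_1,y_2][y_3,x_4]+[x_1,y_3][y_2,x_4]$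 for all choices $x_1\in\{y_1,z_1\}$, $x_4\in\{y_4,z_4\}$; (7) $[y_1,z_2](z_3\circ z_4)-[y_1,z_3](z_2\circ z_4)$. For indices as indicated, $h(y_{i_1},\dots,y_{i_{2m+n}},z_{j_1},\dots,z_{j_{n+2r}})=[y_{i_1},y_{i_2}]\cdots[y_{i_{2m-1}},y_{i_{2m}}]\cdot[y_{i_{2m+1}},z_{j_1}]\cdots[y_{i_{2m+n}},z_{j_n}]\cdot(z_{j_{n+1}}\circ z_{j_{n+2}})\cdots(z_{j_{n+2r-1}}\circ z_{j_{n+2r}})$ (empty products equal $1$). *)

theory Defs
  imports "HOL-Library.Poly_Mapping"
begin

text \<open>Variables: y_i (degree 0) and z_i (degree 1).\<close>
datatype var = Yv nat | Zv nat

type_synonym 'k fpoly = "var list \<Rightarrow>\<^sub>0 'k"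

definition fconst :: "'k::field \<Rightarrow> 'k fpoly" where
  "fconst c = Poly_Mapping.single [] c"

definition fone :: "'k::field fpoly" where
  "fone = fconst 1"

definition fvar :: "var \<Rightarrow> 'k::field fpoly" where
  "fvar x = Poly_Mapping.single [x] 1"

definition fsmult :: "'k::field \<Rightarrow> 'k fpoly \<Rightarrow> 'k fpoly" where
  "fsmult c p = Poly_Mapping.map (\<lambda>a. c * a) p"

definition fmul :: "'k::field fpoly \<Rightarrow> 'k fpoly \<Rightarrow> 'k fpoly" where
  "fmul p q = (\<Sum>(u, v) \<in> Poly_Mapping.keys p \<times> Poly_Mapping.keys q.
                 Poly_Mapping.single (u @ v) (Poly_Mapping.lookup p u * Poly_Mapping.lookup q v))"

definition fprod :: "'k::field fpoly list \<Rightarrow> 'k fpoly" where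
  "fprod ps = foldr fmul ps fone"

definition comm :: "'k::field fpoly \<Rightarrow> 'k fpoly \<Rightarrow> 'k fpoly" where
  "comm a b = fmul a b - fmul b a"

definition jordan :: "'k::field fpoly \<Rightarrow> 'k fpoly \<Rightarrow> 'k fpoly" where
  "jordan a b = fmul a b + fmul b a"

definition lcomm :: "var \<Rightarrow> var list \<Rightarrow> 'k::field fpoly" where
  "lcomm x xs = foldl (\<lambda>a y. comm a (fvar y)) (fvar x) xs"

definition zcount :: "var list \<Rightarrow> nat" where
  "zcount w = length (filter (\<lambda>x. case x of Zv _ \<Rightarrow> True | Yv _ \<Rightarrow> False) w)"

text \<open>p is homogeneous of degree d (d = 0 or 1, the Z_2-degree).\<close>
definition homog :: "bool \<Rightarrow> 'k::field fpoly \<Rightarrow> bool" where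
  "homog d p \<longleftrightarrow> (\<forall>w \<in> Poly_Mapping.keys p. odd (zcount w) = d)"

definition graded_subst :: "(var \<Rightarrow> 'k::field fpoly) \<Rightarrow> bool" where
  "graded_subst \<sigma> \<longleftrightarrow> (\<forall>i. homog False (\<sigma> (Yv i))) \<and> (\<forall>i. homog True (\<sigma> (Zv i)))"

definition subst :: "(var \<Rightarrow> 'k::field fpoly) \<Rightarrow> 'k fpoly \<Rightarrow> 'k fpoly" where
  "subst \<sigma> p = (\<Sum>w \<in> Poly_Mapping.keys p. fsmult (Poly_Mapping.lookup p w) (fprod (map \<sigma> w)))"

inductive_set T2_ideal :: "'k::field fpoly set \<Rightarrow> 'k fpoly set" for S where
  gen: "s \<in> S \<Longrightarrow> s \<in> T2_ideal S"
| zero: "0 \<in> T2_ideal S"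
| add: "p \<in> T2_ideal S \<Longrightarrow> q \<in> T2_ideal S \<Longrightarrow> p + q \<in> T2_ideal S"
| smult: "p \<in> T2_ideal S \<Longrightarrow> fsmult c p \<in> T2_ideal S"
| mult_left: "p \<in> T2_ideal S \<Longrightarrow> fmul a p \<in> T2_ideal S"
| mult_right: "p \<in> T2_ideal S \<Longrightarrow> fmul p a \<in> T2_ideal S"
| endo: "p \<in> T2_ideal S \<Longrightarrow> graded_subst \<sigma> \<Longrightarrow> subst \<sigma> p \<in> T2_ideal S"

definition y :: "nat \<Rightarrow> 'k::field fpoly" where "y i = fvar (Yv i)"
definition z :: "nat \<Rightarrow> 'k::field fpoly" where "z i = fvar (Zv i)"

definition xvar :: "bool \<Rightarrow> nat \<Rightarrow> 'k::field fpoly" where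
  "xvar b i = (if b then z i else y i)"

text \<open>Generators (1)-(7) of I (with the fixed variable indices of the paper).\<close>
definition I_gens :: "'k::field fpoly set" where
  "I_gens =
    {comm (comm (y 1) (y 2)) (y 3), comm (comm (y 1) (y 2)) (z 3),
     comm (comm (y 1) (z 2)) (y 3),
     jordan (comm (y 1) (z 2)) (z 3),
     comm (jordan (z 1) (z 2)) (z 3),
     fmul (jordan (z 1) (z 2)) (jordan (z 3) (z 4))
       - fmul (jordan (z 1) (z 3)) (jordan (z 2) (z 4)),
     fmul (comm (y 1) (z 2)) (jordan (z 3) (z 4))
       - fmul (comm (y 1) (z 3)) (jordan (z 2) (z 4))}
   \<union> {fmul (comm (xvar b1 1) (y 2)) (comm (y 3) (xvar b4 4))
       + fmul (comm (xvar b1 1) (y 3)) (comm (y 2) (xvar b4 4)) | b1 b4. True}"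

definition I_ideal :: "'k::field fpoly set" where
  "I_ideal = T2_ideal I_gens"

inductive_set Y_proper :: "'k::field fpoly set" where
  const: "fconst c \<in> Y_proper"
| zvar: "fvar (Zv j) \<in> Y_proper"
| commutator: "xs \<noteq> [] \<Longrightarrow> lcomm x xs \<in> Y_proper"
| add: "p \<in> Y_proper \<Longrightarrow> q \<in> Y_proper \<Longrightarrow> p + q \<in> Y_proper"
| smult: "p \<in> Y_proper \<Longrightarrow> fsmult c p \<in> Y_proper"
| mult: "p \<in> Y_proper \<Longrightarrow> q \<in> Y_proper \<Longrightarrow> fmul p q \<in> Y_proper"

text \<open>h(y_{i_1},...,y_{i_{2m+n}}, z_{j_1},...,z_{j_{n+2r}}) with index lists is, js
  (0-based list positions).\<close>
definition hpoly :: "nat \<Rightarrow> nat \<Rightarrow> nat \<Rightarrow> nat list \<Rightarrow> nat list \<Rightarrow> 'k::field fpoly" where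
  "hpoly m n r is js =
     fmul (fprod (map (\<lambda>k. comm (y (is ! (2*k))) (y (is ! (2*k+1)))) [0..<m]))
      (fmul (fprod (map (\<lambda>k. comm (y (is ! (2*m+k))) (z (js ! k))) [0..<n]))
            (fprod (map (\<lambda>k. jordan (z (js ! (n+2*k))) (z (js ! (n+2*k+1)))) [0..<r])))"

definition gpoly :: "nat \<Rightarrow> nat \<Rightarrow> nat \<Rightarrow> nat list \<Rightarrow> nat list \<Rightarrow> nat list \<Rightarrow> 'k::field fpoly" where
  "gpoly m n r is js ks = fmul (hpoly m n r is js) (fprod (map z ks))"

definition G_set :: "'k::field fpoly set" where
  "G_set = {gpoly m n r is js ks | m n r is js ks.
              length is = 2*m + n \<and> sorted_wrt (<) is \<and>
              length js = n + 2*r \<and> sorted js \<and>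
              sorted_wrt (<) ks}"

end

theory Submission
  imports Defs
begin

(* We work in the relatively free algebra R = K<Y \<union> Z>/I, realised as a
   quotient type.  Renamings of variables are graded endomorphisms, so every defining
   relation of I holds in R for arbitrary variable indices.  From these relations we
   derive commutation rules for [y_a,y_b], [y_a,z_b], z_a and z_a \<circ> z_b in R.

   (1) The image hR of h is the product of a list of such factors.  A transposition of
       two adjacent y-indices negates it, and one of two adjacent z-indices fixes it;
       each case changes only one or two consecutive factors and is one relation.
       Since char K \<noteq> 2, every hR is zero or \<plusminus> an hR with sorted indices ("normal").
   (2) The image of a normal g_K times a letter [y_a,y_b], [y_a,z_b] or z_a is in the
       K-span of images of normal g_K's: the letter is moved past the z-tail into h,
       or z_a is inserted into the tail using z_j z_j = (z_j \<circ> z_j)/2 and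
       z_k z_j = z_k \<circ> z_j - z_j z_k.  Hence every word in letters lies in that span.
   (3) The span of words in letters is a subalgebra closed under commutation with
       variables, so it contains the image of every Y-proper polynomial.
   Finally, membership in the span inside R lifts to a congruence modulo I. *)

section \<open>The free algebra as a ring\<close>

text \<open>Words form a monoid under concatenation; with this instance the type
  \<open>'k fpoly\<close> of finitely supported functions on words is a ring whose product is
  exactly \<open>fmul\<close>.\<close>
instantiation list :: (type) monoid_add
begin
definition zero_list :: "'a list" where "zero_list = []"
definition plus_list :: "'a list \<Rightarrow> 'a list \<Rightarrow> 'a list" where "plus_list = (@)"
instance by standard (auto simp: zero_list_def plus_list_def)
end

lemma poly_mapping_expand:
  "(p::'a \<Rightarrow>\<^sub>0 'b::comm_monoid_add) = (\<Sum>u\<in>Poly_Mapping.keys p. Poly_Mapping.single u (Poly_Mapping.lookup p u))"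
  by (rule poly_mapping_eqI) (simp add: lookup_sum lookup_single when_def in_keys_iff sum.delta' split: if_splits)

lemma fmul_eq: "fmul p q = p * q"
proof -
  have "p * q = (\<Sum>u\<in>Poly_Mapping.keys p. Poly_Mapping.single u (Poly_Mapping.lookup p u))
              * (\<Sum>v\<in>Poly_Mapping.keys q. Poly_Mapping.single v (Poly_Mapping.lookup q v))"
    using poly_mapping_expand[of p] poly_mapping_expand[of q] by simp
  also have "\<dots> = (\<Sum>u\<in>Poly_Mapping.keys p. \<Sum>v\<in>Poly_Mapping.keys q.
                    Poly_Mapping.single (u@v) (Poly_Mapping.lookup p u * Poly_Mapping.lookup q v))"
    by (simp add: sum_distrib_left sum_distrib_right mult_single plus_list_def sum.swap[of _ "Poly_Mapping.keys q"])
  also have "\<dots> = fmul p q" unfolding fmul_def by (simp add: sum.cartesian_product)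
  finally show ?thesis by simp
qed

abbreviation cpoly :: "'k::field \<Rightarrow> 'k fpoly" where "cpoly c \<equiv> Poly_Mapping.single [] c"

lemma cpoly_mult: "cpoly a * cpoly b = cpoly (a * b)"
  by (simp add: mult_single plus_list_def)

lemma cpoly_add: "cpoly a + cpoly b = cpoly (a + b)"
  by (simp add: single_add)

lemma fone_eq: "fone = 1"
  by (simp add: fone_def fconst_def one_poly_mapping.abs_eq zero_list_def[symmetric] single.abs_eq)

lemma cpoly_one: "cpoly 1 = 1"
  by (metis fone_eq fone_def fconst_def)

lemma cpoly_central: "cpoly c * p = p * cpoly c"
proof -
  have "cpoly c * p = (\<Sum>u\<in>Poly_Mapping.keys p. cpoly c * Poly_Mapping.single u (Poly_Mapping.lookup p u))"
    by (subst poly_mapping_expand[of p]) (simp add: sum_distrib_left)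
  also have "\<dots> = (\<Sum>u\<in>Poly_Mapping.keys p. Poly_Mapping.single u (Poly_Mapping.lookup p u) * cpoly c)"
    by (simp add: mult_single plus_list_def mult.commute)
  also have "\<dots> = p * cpoly c"
    by (subst (2) poly_mapping_expand[of p]) (simp add: sum_distrib_right)
  finally show ?thesis .
qed

lemma fsmult_eq: "fsmult c p = cpoly c * p"
  unfolding fsmult_def using mult_map_scale_conv_mult[of c p] by (simp add: zero_list_def)

lemma fprod_eq: "fprod ps = prod_list ps"
  unfolding fprod_def by (induct ps) (simp_all add: fone_eq fmul_eq)

lemma comm_eq: "comm a b = a * b - b * a" by (simp add: comm_def fmul_eq)
lemma jordan_eq: "jordan a b = a * b + b * a" by (simp add: jordan_def fmul_eq)

lemma subst_eq:
  "subst \<sigma> p = (\<Sum>w\<in>Poly_Mapping.keys p. cpoly (Poly_Mapping.lookup p w) * prod_list (map \<sigma> w))"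
  unfolding subst_def by (simp add: fsmult_eq fprod_eq)

lemma subst_superset:
  assumes "finite A" "Poly_Mapping.keys p \<subseteq> A"
  shows "subst \<sigma> p = (\<Sum>w\<in>A. cpoly (Poly_Mapping.lookup p w) * prod_list (map \<sigma> w))"
  unfolding subst_eq
  by (rule sum.mono_neutral_left) (use assms in \<open>auto simp: in_keys_iff\<close>)

lemma subst_add: "subst \<sigma> (p + q) = subst \<sigma> p + subst \<sigma> q"
proof -
  let ?A = "Poly_Mapping.keys p \<union> Poly_Mapping.keys q"
  have f: "finite ?A" by simp
  have "subst \<sigma> (p + q) = (\<Sum>w\<in>?A. cpoly (Poly_Mapping.lookup (p+q) w) * prod_list (map \<sigma> w))"
    by (rule subst_superset[OF f]) (simp add: keys_add)
  also have "\<dots> = (\<Sum>w\<in>?A. cpoly (Poly_Mapping.lookup p w) * prod_list (map \<sigma> w))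
                + (\<Sum>w\<in>?A. cpoly (Poly_Mapping.lookup q w) * prod_list (map \<sigma> w))"
    by (simp add: lookup_add cpoly_add[symmetric] distrib_right sum.distrib)
  also have "\<dots> = subst \<sigma> p + subst \<sigma> q"
    by (simp add: subst_superset[OF f, symmetric])
  finally show ?thesis .
qed

lemma subst_zero: "subst \<sigma> 0 = 0" by (simp add: subst_eq)

lemma subst_diff: "subst \<sigma> (p - q) = subst \<sigma> p - subst \<sigma> q"
proof -
  have "subst \<sigma> (p - q) + subst \<sigma> q = subst \<sigma> p"
    using subst_add[of \<sigma> "p - q" q] by simp
  then show ?thesis by (simp add: eq_diff_eq)
qed

lemma subst_sum: "finite A \<Longrightarrow> subst \<sigma> (\<Sum>a\<in>A. f a) = (\<Sum>a\<in>A. subst \<sigma> (f a))"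
  by (induct A rule: finite_induct) (simp_all add: subst_zero subst_add)

lemma subst_single: "subst \<sigma> (Poly_Mapping.single u a) = cpoly a * prod_list (map \<sigma> u)"
  by (cases "a = 0") (simp_all add: subst_eq)

text \<open>Multiplicativity: on monomials it is the multiplicativity of \<open>prod_list\<close> on
  concatenated words, using that scalars are central.\<close>
lemma subst_mult: "subst \<sigma> (p * q) = subst \<sigma> p * subst \<sigma> q"
proof -
  let ?P = "Poly_Mapping.keys p" and ?Q = "Poly_Mapping.keys q"
  let ?c = "\<lambda>u v. Poly_Mapping.lookup p u * Poly_Mapping.lookup q v"
  have "p * q = (\<Sum>u\<in>?P. Poly_Mapping.single u (Poly_Mapping.lookup p u))
              * (\<Sum>v\<in>?Q. Poly_Mapping.single v (Poly_Mapping.lookup q v))"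
    using poly_mapping_expand[of p] poly_mapping_expand[of q] by simp
  also have "\<dots> = (\<Sum>u\<in>?P. \<Sum>v\<in>?Q. Poly_Mapping.single (u@v) (?c u v))"
    by (simp add: sum_distrib_left sum_distrib_right mult_single plus_list_def sum.swap[of _ ?Q])
  finally have pq: "subst \<sigma> (p * q) = (\<Sum>u\<in>?P. \<Sum>v\<in>?Q. cpoly (?c u v) * prod_list (map \<sigma> (u@v)))"
    by (simp add: subst_sum subst_single)
  have "\<And>u v. cpoly (?c u v) * prod_list (map \<sigma> (u@v))
     = (cpoly (Poly_Mapping.lookup p u) * prod_list (map \<sigma> u))
       * (cpoly (Poly_Mapping.lookup q v) * prod_list (map \<sigma> v))"
  proof -
    fix u v
    have "(cpoly (Poly_Mapping.lookup p u) * prod_list (map \<sigma> u))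
          * (cpoly (Poly_Mapping.lookup q v) * prod_list (map \<sigma> v))
      = cpoly (Poly_Mapping.lookup p u) * (prod_list (map \<sigma> u) * cpoly (Poly_Mapping.lookup q v))
          * prod_list (map \<sigma> v)"
      by (simp add: mult.assoc)
    also have "\<dots> = cpoly (Poly_Mapping.lookup p u) * (cpoly (Poly_Mapping.lookup q v) * prod_list (map \<sigma> u))
          * prod_list (map \<sigma> v)"
      by (simp only: cpoly_central)
    also have "\<dots> = cpoly (?c u v) * prod_list (map \<sigma> (u@v))"
      by (simp add: mult.assoc cpoly_mult[symmetric])
    finally show "?thesis u v" by simp
  qed
  then have "subst \<sigma> p * subst \<sigma> q = (\<Sum>u\<in>?P. \<Sum>v\<in>?Q. cpoly (?c u v) * prod_list (map \<sigma> (u@v)))"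
    unfolding subst_eq[of _ p] subst_eq[of _ q]
    by (simp add: sum_distrib_left sum_distrib_right sum.swap[of _ ?Q])
  then show ?thesis using pq by simp
qed

lemma subst_fvar: "subst \<sigma> (fvar x) = \<sigma> x"
  by (simp add: fvar_def subst_single cpoly_one)

definition rename_vars :: "(nat \<Rightarrow> nat) \<Rightarrow> (nat \<Rightarrow> nat) \<Rightarrow> var \<Rightarrow> 'k::field fpoly" where
  "rename_vars f g v = (case v of Yv i \<Rightarrow> fvar (Yv (f i)) | Zv i \<Rightarrow> fvar (Zv (g i)))"

lemma graded_rename_vars: "graded_subst (rename_vars f g)"
  by (simp add: graded_subst_def homog_def rename_vars_def fvar_def zcount_def)

definition rcomm :: "'a::ring \<Rightarrow> 'a \<Rightarrow> 'a" where "rcomm a b = a * b - b * a"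
definition rjord :: "'a::ring \<Rightarrow> 'a \<Rightarrow> 'a" where "rjord a b = a * b + b * a"

lemma commute_of_rcomm_zero: "rcomm u w = 0 \<Longrightarrow> u * w = w * (u::'a::ring)"
  by (simp add: rcomm_def)
lemma anticommute_of_rjord_zero: "rjord u w = 0 \<Longrightarrow> w * u = - (u * (w::'a::ring))"
  by (simp add: rjord_def add_eq_0_iff)

lemma commute_assoc: fixes a u v :: "'a::ring" shows "a*u = u*a \<Longrightarrow> a*u*v = u*(a*v)"
  by (simp add: mult.assoc[symmetric])

lemma anticommute_assoc: fixes a u v :: "'a::ring" shows "u*a = -(a*u) \<Longrightarrow> a*u*v = -(u*(a*v))"
  by (metis minus_minus mult.assoc mult_minus_left)

lemma commute_rcomm: fixes a u w :: "'a::ring"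
  assumes "a*u = u*a" "a*w = w*a" shows "a * rcomm u w = rcomm u w * a"
proof -
  have "a*u*w = u*w*a" "a*w*u = w*u*a"
    using commute_assoc[OF assms(1), of w] commute_assoc[OF assms(2), of u] assms by (simp_all add: mult.assoc)
  then show ?thesis by (simp add: rcomm_def algebra_simps)
qed

lemma commute_rjord: fixes a u w :: "'a::ring"
  assumes "a*u = u*a" "a*w = w*a" shows "a * rjord u w = rjord u w * a"
proof -
  have "a*u*w = u*w*a" "a*w*u = w*u*a"
    using commute_assoc[OF assms(1), of w] commute_assoc[OF assms(2), of u] assms by (simp_all add: mult.assoc)
  then show ?thesis by (simp add: rjord_def algebra_simps)
qed

lemma anticommute_rcomm: fixes a u w :: "'a::ring"
  assumes "a*u = u*a" "w*a = -(a*w)" shows "a * rcomm u w = - (rcomm u w * a)"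
proof -
  have "a*u*w = - (u*w*a)" "a*w*u = - (w*u*a)"
    using commute_assoc[OF assms(1), of w] anticommute_assoc[OF assms(2), of u] assms
    by (simp_all add: mult.assoc minus_equation_iff[of "a*w"])
  then show ?thesis by (simp add: rcomm_def algebra_simps)
qed

lemma commute_rjord_of_anticommute: fixes a u w :: "'a::ring"
  assumes "u*a = -(a*u)" "w*a = -(a*w)" shows "a * rjord u w = rjord u w * a"
proof -
  have "a*u*w = u*w*a" "a*w*u = w*u*a"
    using anticommute_assoc[OF assms(1), of w] anticommute_assoc[OF assms(2), of u] assms
    by (simp_all add: mult.assoc minus_equation_iff[of "a*w"] minus_equation_iff[of "a*u"])
  then show ?thesis by (simp add: rjord_def algebra_simps)
qed

lemma commute_prod_list: fixes a :: "'a::{ring,monoid_mult}"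
  shows "(\<forall>u\<in>set xs. a*u = u*a) \<Longrightarrow> a * prod_list xs = prod_list xs * a"
proof (induct xs)
  case (Cons u xs)
  then have "a * u = u * a" "a * prod_list xs = prod_list xs * a" by auto
  then show ?case by (simp add: mult.assoc[symmetric]) (simp add: mult.assoc)
qed simp

definition signed :: "nat \<Rightarrow> 'a::ab_group_add \<Rightarrow> 'a" where
  "signed n v = (if even n then v else - v)"

lemma anticommute_prod_list: fixes a :: "'a::{ring,monoid_mult}"
  shows "(\<forall>u\<in>set xs. u*a = -(a*u)) \<Longrightarrow> prod_list xs * a = signed (length xs) (a * prod_list xs)"
proof (induct xs)
  case Nil then show ?case by (simp add: signed_def)
next
  case (Cons u xs)
  then have 1: "u * a = - (a * u)" and 2: "prod_list xs * a = signed (length xs) (a * prod_list xs)" by auto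
  have "prod_list (u # xs) * a = u * (prod_list xs * a)" by (simp add: mult.assoc)
  also have "\<dots> = signed (length xs) (u * a * prod_list xs)" using 2 by (simp add: signed_def mult.assoc)
  also have "\<dots> = signed (length (u#xs)) (a * prod_list (u # xs))" using 1 by (simp add: signed_def mult.assoc)
  finally show ?case .
qed

lemma signed_mult_left: "signed n (a * b) = a * signed n (b::'a::ring)" by (simp add: signed_def)

section \<open>Sorting functions that are equivariant under adjacent transpositions\<close>

definition swap_adj :: "nat \<Rightarrow> 'a list \<Rightarrow> 'a list" where
  "swap_adj p xs = xs[p := xs ! Suc p, Suc p := xs ! p]"

text \<open>\<open>f\<close> changes by \<open>g\<close> under each transposition of adjacent entries of lists of length
  \<open>n\<close>; we use \<open>g = uminus\<close> (antisymmetry) and \<open>g = id\<close> (symmetry).\<close>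
definition swap_equivariant :: "('b list \<Rightarrow> 'a) \<Rightarrow> ('a \<Rightarrow> 'a) \<Rightarrow> nat \<Rightarrow> bool" where
  "swap_equivariant f g n \<longleftrightarrow> (\<forall>xs p. length xs = n \<longrightarrow> Suc p < n \<longrightarrow> f (swap_adj p xs) = g (f xs))"

lemma nth_swap_adj:
  "Suc p < length xs \<Longrightarrow> swap_adj p xs ! i = (if i = p then xs ! Suc p else if i = Suc p then xs ! p else xs ! i)"
  by (simp add: swap_adj_def nth_list_update)

lemma swap_equivariant_Cons: "swap_equivariant f g (Suc n) \<Longrightarrow> swap_equivariant (\<lambda>ys. f (a # ys)) g n"
  unfolding swap_equivariant_def
proof (intro allI impI)
  fix xs :: "'a list" and p
  assume "\<forall>xs p. length xs = Suc n \<longrightarrow> Suc p < Suc n \<longrightarrow> f (swap_adj p xs) = g (f xs)"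
    and "length xs = n" "Suc p < n"
  then show "f (a # swap_adj p xs) = g (f (a # xs))"
    by (metis Suc_less_eq length_Cons list_update_code(3) nth_Cons_Suc swap_adj_def)
qed

lemma swap_equivariant_insort:
  assumes "swap_equivariant f g (Suc (length s))" "sorted s" "\<And>v. g (g v) = v"
  shows "f (x # s) = f (insort x s) \<or> f (x # s) = g (f (insort x s))"
  using assms(1,2)
proof (induct s arbitrary: f)
  case (Cons a s)
  show ?case
  proof (cases "x \<le> a")
    case False
    have swap: "f (x # a # s) = g (f (a # x # s))"
      using Cons.prems(1)[unfolded swap_equivariant_def, rule_format, of "a#x#s" 0]
      by (simp add: swap_adj_def assms(3))
    have "f (a # x # s) = f (a # insort x s) \<or> f (a # x # s) = g (f (a # insort x s))"
      using Cons.hyps[of "\<lambda>ys. f (a # ys)"] swap_equivariant_Cons[of f g _ a] Cons.prems by simp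
    then show ?thesis using False swap assms(3) by auto
  qed simp
qed simp

lemma swap_equivariant_sort:
  assumes "swap_equivariant f g (length xs)" "\<And>v. g (g v) = v"
  shows "f xs = f (sort xs) \<or> f xs = g (f (sort xs))"
  using assms(1)
proof (induct xs arbitrary: f)
  case (Cons x xs)
  have "f (x # xs) = f (x # sort xs) \<or> f (x # xs) = g (f (x # sort xs))"
    using Cons.hyps[of "\<lambda>ys. f (x # ys)"] swap_equivariant_Cons[of f g _ x] Cons.prems by simp
  moreover have "f (x # sort xs) = f (insort x (sort xs)) \<or> f (x # sort xs) = g (f (insort x (sort xs)))"
    by (rule swap_equivariant_insort) (use Cons.prems assms(2) in auto)
  ultimately show ?case using assms(2) by auto
qed simp

lemma sorted_adjacent_dup: "sorted s \<Longrightarrow> \<not> distinct s \<Longrightarrow> \<exists>p. Suc p < length s \<and> s ! p = s ! Suc p"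
proof (induct s)
  case (Cons a s)
  show ?case
  proof (cases "a \<in> set s")
    case True
    then obtain b s' where s: "s = b # s'" by (cases s) auto
    have "a \<le> b" "b \<le> a" using Cons.prems(1) True s by auto
    then show ?thesis using s by (intro exI[of _ 0]) simp
  next
    case False
    then obtain p where "Suc p < length s" "s ! p = s ! Suc p" using Cons by auto
    then show ?thesis by (intro exI[of _ "Suc p"]) simp
  qed
qed simp

lemma antisymmetric_repeated_zero:
  fixes xs :: "'b::linorder list" and f :: "'b list \<Rightarrow> 'a::ab_group_add"
  assumes "swap_equivariant f uminus (length xs)" "\<not> distinct xs" "\<And>v::'a. v = - v \<Longrightarrow> v = 0"
  shows "f xs = 0"
proof -
  define s where "s = sort xs"
  have "sorted s" "\<not> distinct s" using assms(2) by (simp_all add: s_def)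
  then obtain p where p: "Suc p < length s" "s ! p = s ! Suc p"
    using sorted_adjacent_dup[of s] by blast
  have "swap_adj p s = s" unfolding swap_adj_def using p(2) by (metis list_update_id)
  then have "f s = - f s" using assms(1)[unfolded swap_equivariant_def, rule_format, of s p] p(1)
    by (simp add: s_def)
  then have "f s = 0" by (rule assms(3))
  then show ?thesis using swap_equivariant_sort[OF assms(1)] by (auto simp: s_def)
qed

lemma prod_list_change_one:
  fixes fs gs :: "'a::monoid_mult list"
  assumes len: "length gs = length fs" and k: "k < length fs"
    and same: "\<And>j. j < length fs \<Longrightarrow> j \<noteq> k \<Longrightarrow> gs!j = fs!j"
    and change: "gs!k = c * fs!k" and central: "\<And>x. c * x = x * c"
  shows "prod_list gs = c * prod_list fs"
proof -
  have tk: "take k gs = take k fs" and dr: "drop (Suc k) gs = drop (Suc k) fs"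
    using len k same by (auto intro!: nth_equalityI)
  have "prod_list gs = prod_list (take k fs) * (c * fs!k) * prod_list (drop (Suc k) fs)"
    using id_take_nth_drop[of k gs] len k by (metis tk dr change prod_list.Cons prod_list.append mult.assoc)
  also have "\<dots> = c * (prod_list (take k fs) * fs!k * prod_list (drop (Suc k) fs))"
    by (simp add: mult.assoc central[of "prod_list (take k fs)"] flip: mult.assoc)
  also have "\<dots> = c * prod_list fs"
    using id_take_nth_drop[of k fs] k by (metis prod_list.Cons prod_list.append mult.assoc)
  finally show ?thesis .
qed

lemma prod_list_change_pair:
  fixes fs gs :: "'a::monoid_mult list"
  assumes len: "length gs = length fs" and k: "Suc k < length fs"
    and same: "\<And>j. j < length fs \<Longrightarrow> j \<noteq> k \<Longrightarrow> j \<noteq> Suc k \<Longrightarrow> gs!j = fs!j"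
    and change: "gs!k * gs!Suc k = c * (fs!k * fs!Suc k)" and central: "\<And>x. c * x = x * c"
  shows "prod_list gs = c * prod_list fs"
proof -
  have split: "xs = take k xs @ xs!k # xs!Suc k # drop (Suc (Suc k)) xs" if "Suc k < length xs" for xs :: "'a list"
    using that by (simp add: Cons_nth_drop_Suc)
  have tk: "take k gs = take k fs" and dr: "drop (Suc (Suc k)) gs = drop (Suc (Suc k)) fs"
    using len k same by (auto intro!: nth_equalityI)
  have "prod_list gs = prod_list (take k fs) * (c * (fs!k * fs!Suc k)) * prod_list (drop (Suc (Suc k)) fs)"
    using split[of gs] len k by (metis tk dr change prod_list.Cons prod_list.append mult.assoc)
  also have "\<dots> = c * (prod_list (take k fs) * (fs!k * fs!Suc k) * prod_list (drop (Suc (Suc k)) fs))"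
    by (simp add: mult.assoc central[of "prod_list (take k fs)"] flip: mult.assoc)
  also have "\<dots> = c * prod_list fs"
    using split[of fs] k by (metis prod_list.Cons prod_list.append mult.assoc)
  finally show ?thesis .
qed

section \<open>The relatively free algebra R\<close>

lemma I_add: "p \<in> I_ideal \<Longrightarrow> q \<in> I_ideal \<Longrightarrow> p + q \<in> I_ideal"
  unfolding I_ideal_def by (rule T2_ideal.add)
lemma I_zero: "0 \<in> I_ideal" unfolding I_ideal_def by (rule T2_ideal.zero)
lemma I_mult_left: "p \<in> I_ideal \<Longrightarrow> a * p \<in> I_ideal"
  unfolding I_ideal_def using T2_ideal.mult_left[of p _ a] by (simp add: fmul_eq)
lemma I_mult_right: "p \<in> I_ideal \<Longrightarrow> p * a \<in> I_ideal"
  unfolding I_ideal_def using T2_ideal.mult_right[of p _ a] by (simp add: fmul_eq)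
lemma I_uminus: "p \<in> I_ideal \<Longrightarrow> - p \<in> I_ideal"
  using I_mult_left[of p "- 1"] by simp
lemma I_diff: "p \<in> I_ideal \<Longrightarrow> q \<in> I_ideal \<Longrightarrow> p - q \<in> I_ideal"
  using I_add[of p "-q"] I_uminus[of q] by simp

lemma renamed_gen_in_I: "p \<in> I_gens \<Longrightarrow> subst (rename_vars f g) p \<in> I_ideal"
  unfolding I_ideal_def by (rule T2_ideal.endo[OF T2_ideal.gen graded_rename_vars])

definition I_cong :: "'k::field fpoly \<Rightarrow> 'k fpoly \<Rightarrow> bool" where
  "I_cong p q \<longleftrightarrow> p - q \<in> I_ideal"

lemma equivp_I_cong: "equivp I_cong"
proof (rule equivpI)
  show "reflp I_cong" by (simp add: reflp_def I_cong_def I_zero)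
  show "symp I_cong" unfolding symp_def I_cong_def using I_uminus by fastforce
  show "transp I_cong" unfolding transp_def I_cong_def using I_add by fastforce
qed

quotient_type (overloaded) 'k R = "'k::field fpoly" / I_cong
  by (rule equivp_I_cong)

instantiation R :: (field) "{ring, monoid_mult}"
begin
lift_definition zero_R :: "'a R" is "0" .
lift_definition one_R :: "'a R" is "1" .
lift_definition plus_R :: "'a R \<Rightarrow> 'a R \<Rightarrow> 'a R" is "(+)"
  unfolding I_cong_def by (drule (1) I_add) (simp add: algebra_simps)
lift_definition uminus_R :: "'a R \<Rightarrow> 'a R" is "uminus"
  unfolding I_cong_def by (drule I_uminus) (simp add: algebra_simps)
lift_definition minus_R :: "'a R \<Rightarrow> 'a R \<Rightarrow> 'a R" is "(-)"
  unfolding I_cong_def by (drule (1) I_diff) (simp add: algebra_simps)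
lift_definition times_R :: "'a R \<Rightarrow> 'a R \<Rightarrow> 'a R" is "(*)"
proof -
  fix p1 p2 q1 q2 :: "'a fpoly"
  assume "I_cong p1 p2" "I_cong q1 q2"
  then have "(p1 - p2) * q1 + p2 * (q1 - q2) \<in> I_ideal"
    unfolding I_cong_def by (intro I_add I_mult_right I_mult_left)
  then show "I_cong (p1 * q1) (p2 * q2)" unfolding I_cong_def by (simp add: algebra_simps)
qed
instance
  by standard (transfer, simp add: I_cong_def I_zero algebra_simps)+
end

lemma abs_add: "abs_R (p + q) = abs_R p + abs_R q" by (simp add: plus_R.abs_eq)
lemma abs_diff: "abs_R (p - q) = abs_R p - abs_R q" by (simp add: minus_R.abs_eq)
lemma abs_mult: "abs_R (p * q) = abs_R p * abs_R q" by (simp add: times_R.abs_eq)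
lemma abs_zero: "abs_R 0 = 0" by (simp add: zero_R.abs_eq)
lemma abs_one: "abs_R 1 = 1" by (simp add: one_R.abs_eq)

lemma abs_fprod: "abs_R (fprod ps) = prod_list (map abs_R ps)"
  by (induct ps) (simp_all add: fprod_def fone_eq fmul_eq abs_one abs_mult)

lemma abs_comm: "abs_R (comm p q) = rcomm (abs_R p) (abs_R q)"
  by (simp add: comm_eq abs_diff abs_mult rcomm_def)
lemma abs_jordan: "abs_R (jordan p q) = rjord (abs_R p) (abs_R q)"
  by (simp add: jordan_eq abs_add abs_mult rjord_def)

definition Y :: "nat \<Rightarrow> 'k::field R" where "Y i = abs_R (y i)"
definition Z :: "nat \<Rightarrow> 'k::field R" where "Z i = abs_R (z i)"

lemma abs_Y: "abs_R (fvar (Yv i)) = Y i" by (simp add: Y_def y_def)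
lemma abs_Z: "abs_R (fvar (Zv i)) = Z i" by (simp add: Z_def z_def)

definition scal :: "'k::field \<Rightarrow> 'k R" where "scal c = abs_R (cpoly c)"

lemma scal_add: "scal a + scal b = scal (a + b)" by (simp add: scal_def abs_add[symmetric] cpoly_add)
lemma scal_central: "scal c * x = x * scal c"
  by (induct x) (simp add: scal_def abs_mult[symmetric] cpoly_central)
lemma scal_one: "scal 1 = 1" by (simp add: scal_def abs_one[symmetric] cpoly_one)
lemma scal_zero: "scal 0 = 0" by (simp add: scal_def abs_zero)

lemma abs_fsmult: "abs_R (fsmult c p) = scal c * abs_R p"
  by (simp add: fsmult_eq abs_mult scal_def)

definition idx4 :: "nat \<Rightarrow> nat \<Rightarrow> nat \<Rightarrow> nat \<Rightarrow> nat \<Rightarrow> nat" where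
  "idx4 a b c d i = (if i = 1 then a else if i = 2 then b else if i = 3 then c else d)"

lemma renamed_gen_zero:
  "p \<in> I_gens \<Longrightarrow> abs_R (subst (rename_vars (idx4 a b c d) (idx4 a b c d)) p) = 0"
  using renamed_gen_in_I by (metis R.abs_eq_iff I_cong_def abs_zero diff_zero)

lemmas rel_simps = abs_add abs_diff abs_mult subst_add subst_diff subst_mult subst_fvar
  comm_eq jordan_eq y_def z_def rename_vars_def xvar_def abs_Y abs_Z idx4_def rcomm_def rjord_def fmul_eq

lemma I_gens_members:
  "comm (comm (y 1) (y 2)) (y 3) \<in> I_gens" "comm (comm (y 1) (y 2)) (z 3) \<in> I_gens"
  "comm (comm (y 1) (z 2)) (y 3) \<in> I_gens" "jordan (comm (y 1) (z 2)) (z 3) \<in> I_gens"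
  "comm (jordan (z 1) (z 2)) (z 3) \<in> I_gens"
  "fmul (jordan (z 1) (z 2)) (jordan (z 3) (z 4)) - fmul (jordan (z 1) (z 3)) (jordan (z 2) (z 4)) \<in> I_gens"
  "fmul (comm (xvar b1 1) (y 2)) (comm (y 3) (xvar b4 4))
     + fmul (comm (xvar b1 1) (y 3)) (comm (y 2) (xvar b4 4)) \<in> I_gens"
  "fmul (comm (y 1) (z 2)) (jordan (z 3) (z 4)) - fmul (comm (y 1) (z 3)) (jordan (z 2) (z 4)) \<in> I_gens"
  unfolding I_gens_def by blast+

lemma rel1a: "rcomm (rcomm (Y a) (Y b)) (Y c) = (0::'k::field R)"
  using renamed_gen_zero[OF I_gens_members(1), where a=a and b=b and c=c] by (simp add: rel_simps)

lemma rel1b: "rcomm (rcomm (Y a) (Y b)) (Z c) = (0::'k::field R)"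
  using renamed_gen_zero[OF I_gens_members(2), where a=a and b=b and c=c] by (simp add: rel_simps)

lemma rel2: "rcomm (rcomm (Y a) (Z b)) (Y c) = (0::'k::field R)"
  using renamed_gen_zero[OF I_gens_members(3), where a=a and b=b and c=c] by (simp add: rel_simps)

lemma rel3: "rjord (rcomm (Y a) (Z b)) (Z c) = (0::'k::field R)"
  using renamed_gen_zero[OF I_gens_members(4), where a=a and b=b and c=c] by (simp add: rel_simps)

lemma rel4: "rcomm (rjord (Z a) (Z b)) (Z c) = (0::'k::field R)"
  using renamed_gen_zero[OF I_gens_members(5), where a=a and b=b and c=c] by (simp add: rel_simps)

lemma rel5: "rjord (Z a) (Z b) * rjord (Z c) (Z d) = (rjord (Z a) (Z c) * rjord (Z b) (Z d) :: 'k::field R)"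
  using renamed_gen_zero[OF I_gens_members(6), where a=a and b=b and c=c and d=d] by (simp add: rel_simps)

definition Xv :: "bool \<Rightarrow> nat \<Rightarrow> 'k::field R" where "Xv b i = (if b then Z i else Y i)"

lemma rel6: "rcomm (Xv b1 a) (Y b) * rcomm (Y c) (Xv b4 d)
           + rcomm (Xv b1 a) (Y c) * rcomm (Y b) (Xv b4 d) = (0 :: 'k::field R)"
  using renamed_gen_zero[OF I_gens_members(7)[of b1 b4], where a=a and b=b and c=c and d=d]
  by (cases b1; cases b4) (simp_all add: rel_simps Xv_def)

lemma rel7: "rcomm (Y a) (Z b) * rjord (Z c) (Z d) = (rcomm (Y a) (Z c) * rjord (Z b) (Z d) :: 'k::field R)"
  using renamed_gen_zero[OF I_gens_members(8), where a=a and b=b and c=c and d=d] by (simp add: rel_simps)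

definition cYY :: "nat \<Rightarrow> nat \<Rightarrow> 'k::field R" where "cYY a b = rcomm (Y a) (Y b)"
definition cYZ :: "nat \<Rightarrow> nat \<Rightarrow> 'k::field R" where "cYZ a b = rcomm (Y a) (Z b)"
definition jZZ :: "nat \<Rightarrow> nat \<Rightarrow> 'k::field R" where "jZZ a b = rjord (Z a) (Z b)"

lemma cYY_Y: "cYY a b * Y c = Y c * cYY a b" unfolding cYY_def by (rule commute_of_rcomm_zero[OF rel1a])
lemma cYY_Z: "cYY a b * Z c = Z c * cYY a b" unfolding cYY_def by (rule commute_of_rcomm_zero[OF rel1b])
lemma cYZ_Y: "cYZ a b * Y c = Y c * cYZ a b" unfolding cYZ_def by (rule commute_of_rcomm_zero[OF rel2])
lemma cYZ_Z: "Z c * cYZ a b = - (cYZ a b * Z c)" unfolding cYZ_def by (rule anticommute_of_rjord_zero[OF rel3])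
lemma jZZ_Z: "jZZ a b * Z c = Z c * jZZ a b" unfolding jZZ_def by (rule commute_of_rcomm_zero[OF rel4])

lemma jZZ_sym: "jZZ a b = jZZ b a" by (simp add: jZZ_def rjord_def add.commute)
lemma cYY_anti: "cYY b a = - cYY a b" by (simp add: cYY_def rcomm_def)
lemma rcomm_Z_Y: "rcomm (Z p) (Y a) = - cYZ a p" by (simp add: cYZ_def rcomm_def)

lemma cYY_cYZ: "cYY a b * cYZ c d = cYZ c d * cYY a b"
  unfolding cYZ_def by (rule commute_rcomm) (simp_all add: cYY_Y cYY_Z)
lemma cYY_jZZ: "cYY a b * jZZ c d = jZZ c d * cYY a b"
  unfolding jZZ_def by (rule commute_rjord) (simp_all add: cYY_Z)
lemma cYZ_jZZ: "cYZ a b * jZZ c d = jZZ c d * cYZ a b"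
  unfolding jZZ_def by (rule commute_rjord_of_anticommute) (simp_all add: cYZ_Z)
lemma cYZ_cYZ: "cYZ a b * cYZ c d = - (cYZ c d * cYZ a b)"
  unfolding cYZ_def[of c d] by (rule anticommute_rcomm) (simp_all add: cYZ_Y cYZ_Z)

lemma jZZ_exchange: "jZZ a b * jZZ c d = jZZ a c * jZZ b d"
  unfolding jZZ_def by (rule rel5)

lemma cYZ_jZZ_exchange: "cYZ a b * jZZ c d = cYZ a c * jZZ b d"
  unfolding jZZ_def cYZ_def by (rule rel7)

lemma cYY_exchange: "cYY a b * cYY c d = - (cYY a c * cYY b d)"
  using rel6[of False a b c False d] by (simp add: Xv_def cYY_def eq_neg_iff_add_eq_0)

lemma cYY_cYZ_exchange: "cYY a b * cYZ c d = - (cYY a c * cYZ b d)"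
  using rel6[of False a b c True d] by (simp add: Xv_def cYY_def cYZ_def eq_neg_iff_add_eq_0)

lemma cYZ_exchange_y: "cYZ a p * cYZ b q = - (cYZ b p * cYZ a q)"
proof -
  have "- (cYZ a p * cYZ b q) + - (cYZ b p * cYZ a q) = (0::'k::field R)"
    using rel6[of True p a b True q] by (simp add: Xv_def rcomm_Z_Y cYZ_def[symmetric])
  then show ?thesis by (metis add_eq_0_iff minus_minus)
qed

lemma cYZ_exchange_z: "cYZ a p * cYZ b q = cYZ a q * cYZ b p"
  using cYZ_cYZ[of a p b q] cYZ_exchange_y[of b q a p] by (metis minus_minus)

section \<open>The elements h in R\<close>

definition facYY :: "nat list \<Rightarrow> nat \<Rightarrow> 'k::field R" where
  "facYY ys k = cYY (ys!(2*k)) (ys!(2*k+1))"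
definition facYZ :: "nat \<Rightarrow> nat list \<Rightarrow> nat list \<Rightarrow> nat \<Rightarrow> 'k::field R" where
  "facYZ m ys zs k = cYZ (ys!(2*m+k)) (zs!k)"
definition facZZ :: "nat \<Rightarrow> nat list \<Rightarrow> nat \<Rightarrow> 'k::field R" where
  "facZZ n zs k = jZZ (zs!(n+2*k)) (zs!(n+2*k+1))"

definition hfactors :: "nat \<Rightarrow> nat \<Rightarrow> nat \<Rightarrow> nat list \<Rightarrow> nat list \<Rightarrow> 'k::field R list" where
  "hfactors m n r ys zs = map (facYY ys) [0..<m] @ map (facYZ m ys zs) [0..<n] @ map (facZZ n zs) [0..<r]"

definition hR :: "nat \<Rightarrow> nat \<Rightarrow> nat \<Rightarrow> nat list \<Rightarrow> nat list \<Rightarrow> 'k::field R" where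
  "hR m n r ys zs = prod_list (hfactors m n r ys zs)"

lemma hR_blocks: "hR m n r ys zs = prod_list (map (facYY ys) [0..<m])
    * (prod_list (map (facYZ m ys zs) [0..<n]) * prod_list (map (facZZ n zs) [0..<r]))"
  by (simp add: hR_def hfactors_def)

lemma length_hfactors [simp]: "length (hfactors m n r ys zs) = m + n + r"
  by (simp add: hfactors_def)

lemma nth_hfactors:
  "j < m + n + r \<Longrightarrow> hfactors m n r ys zs ! j =
     (if j < m then cYY (ys!(2*j)) (ys!(2*j+1))
      else if j < m + n then cYZ (ys!(m+j)) (zs!(j-m))
      else jZZ (zs!(n+2*(j-m-n))) (zs!(n+2*(j-m-n)+1)))"
  by (auto simp: hfactors_def nth_append facYY_def facYZ_def facZZ_def)

text \<open>The positions of \<open>ys\<close> and of \<open>zs\<close> on which the \<open>j\<close>-th factor depends.\<close>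
definition ypos :: "nat \<Rightarrow> nat \<Rightarrow> nat \<Rightarrow> nat \<Rightarrow> bool" where
  "ypos m n j i \<longleftrightarrow> (j < m \<and> (i = 2*j \<or> i = 2*j+1)) \<or> (m \<le> j \<and> j < m + n \<and> i = m + j)"
definition zpos :: "nat \<Rightarrow> nat \<Rightarrow> nat \<Rightarrow> nat \<Rightarrow> bool" where
  "zpos m n j i \<longleftrightarrow> (m \<le> j \<and> j < m + n \<and> i = j - m)
                    \<or> (m + n \<le> j \<and> (i = n+2*(j-m-n) \<or> i = n+2*(j-m-n)+1))"

lemma hfactors_local:
  assumes "j < m + n + r"
    and "\<And>i. ypos m n j i \<Longrightarrow> ys'!i = ys!i" and "\<And>i. zpos m n j i \<Longrightarrow> zs'!i = zs!i"
  shows "hfactors m n r ys' zs' ! j = hfactors m n r ys zs ! j"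
  using assms by (simp add: nth_hfactors ypos_def zpos_def)

text \<open>Antisymmetry in the y-indices: a transposition inside one \<open>[y,y]\<close> changes its sign;
  between two \<open>[y,y]\<close>, between \<open>[y,y]\<close> and \<open>[y,z]\<close>, or between two \<open>[y,z]\<close> it is
  relation (6).\<close>
lemma hR_swap_ys:
  assumes ly: "length ys = 2*m+n" and p: "Suc p < 2*m+n"
  shows "hR m n r (swap_adj p ys) zs = - (hR m n r ys zs :: 'k::field R)"
proof -
  define ys' where "ys' = swap_adj p ys"
  define fs where "fs = (hfactors m n r ys zs :: 'k R list)"
  define gs where "gs = (hfactors m n r ys' zs :: 'k R list)"
  have len: "length gs = length fs" "length fs = m+n+r" by (simp_all add: fs_def gs_def)
  have sw: "ys'!i = (if i = p then ys!Suc p else if i = Suc p then ys!p else ys!i)" for i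
    using nth_swap_adj[of p ys i] ly p by (simp add: ys'_def)
  have same: "gs!j = fs!j" if "j < m+n+r" "\<And>i. ypos m n j i \<Longrightarrow> i \<noteq> p \<and> i \<noteq> Suc p" for j
    unfolding fs_def gs_def by (rule hfactors_local) (use that in \<open>auto simp: sw\<close>)
  have central: "(-1) * x = x * (-1)" for x :: "'k R" by simp
  have "(\<exists>k. p = 2*k \<and> Suc p < 2*m) \<or> (\<exists>k. p = 2*k+1 \<and> Suc p < 2*m)
      \<or> (\<exists>k. m = Suc k \<and> p = 2*k+1) \<or> (\<exists>t. p = 2*m+t)"
    by presburger
  then consider (YY) k where "p = 2*k" "Suc p < 2*m" | (YY_YY) k where "p = 2*k+1" "Suc p < 2*m"
    | (YY_YZ) k where "m = Suc k" "p = 2*k+1" | (YZ_YZ) t where "p = 2*m+t"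
    by blast
  then have "prod_list gs = (-1) * prod_list fs"
  proof cases
    case YY
    show ?thesis
    proof (rule prod_list_change_one[OF len(1) _ _ _ central])
      show "k < length fs" using YY len by simp
      show "gs!j = fs!j" if "j < length fs" "j \<noteq> k" for j
        using that YY len by (intro same) (auto simp: ypos_def)
      show "gs!k = (-1) * fs!k"
        using YY cYY_anti[of "ys!(2*k+1)" "ys!(2*k)"] by (simp add: fs_def gs_def nth_hfactors sw)
    qed
  next
    case YY_YY
    show ?thesis
    proof (rule prod_list_change_pair[OF len(1) _ _ _ central])
      show "Suc k < length fs" using YY_YY len by simp
      show "gs!j = fs!j" if "j < length fs" "j \<noteq> k" "j \<noteq> Suc k" for j
        using that YY_YY len by (intro same) (auto simp: ypos_def)
      show "gs!k * gs!Suc k = (-1) * (fs!k * fs!Suc k)"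
        using YY_YY cYY_exchange[of "ys!(2*k)" "ys!(2*k+2)" "ys!(2*k+1)" "ys!(2*k+3)"]
        by (simp add: fs_def gs_def nth_hfactors sw numeral_eq_Suc)
    qed
  next
    case YY_YZ
    have n: "0 < n" using p YY_YZ by simp
    show ?thesis
    proof (rule prod_list_change_pair[OF len(1) _ _ _ central])
      show "Suc k < length fs" using YY_YZ n len by simp
      show "gs!j = fs!j" if "j < length fs" "j \<noteq> k" "j \<noteq> Suc k" for j
        using that YY_YZ len by (intro same) (auto simp: ypos_def)
      show "gs!k * gs!Suc k = (-1) * (fs!k * fs!Suc k)"
        using YY_YZ n cYY_cYZ_exchange[of "ys!(2*k)" "ys!(2*k+2)" "ys!(2*k+1)" "zs!0"]
        by (simp add: fs_def gs_def nth_hfactors sw numeral_eq_Suc)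
    qed
  next
    case YZ_YZ
    show ?thesis
    proof (rule prod_list_change_pair[OF len(1) _ _ _ central])
      show "Suc (m+t) < length fs" using YZ_YZ p len by simp
      show "gs!j = fs!j" if "j < length fs" "j \<noteq> m+t" "j \<noteq> Suc (m+t)" for j
        using that YZ_YZ len by (intro same) (auto simp: ypos_def)
      show "gs!(m+t) * gs!Suc (m+t) = (-1) * (fs!(m+t) * fs!Suc (m+t))"
        using YZ_YZ p cYZ_exchange_y[of "ys!Suc p" "zs!t" "ys!p" "zs!Suc t"]
        by (simp add: fs_def gs_def nth_hfactors sw add.assoc[symmetric] mult_2)
    qed
  qed
  then show ?thesis by (simp add: hR_def fs_def gs_def ys'_def)
qed

text \<open>Symmetry in the z-indices: by relation (6) between two \<open>[y,z]\<close>, by (7) between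
  \<open>[y,z]\<close> and \<open>z \<circ> z\<close>, by commutativity of \<open>\<circ>\<close>, and by (5) between two \<open>z \<circ> z\<close>.\<close>
lemma hR_swap_zs:
  assumes lz: "length zs = n+2*r" and p: "Suc p < n+2*r"
  shows "hR m n r ys (swap_adj p zs) = (hR m n r ys zs :: 'k::field R)"
proof -
  define zs' where "zs' = swap_adj p zs"
  define fs where "fs = (hfactors m n r ys zs :: 'k R list)"
  define gs where "gs = (hfactors m n r ys zs' :: 'k R list)"
  have len: "length gs = length fs" "length fs = m+n+r" by (simp_all add: fs_def gs_def)
  have sw: "zs'!i = (if i = p then zs!Suc p else if i = Suc p then zs!p else zs!i)" for i
    using nth_swap_adj[of p zs i] lz p by (simp add: zs'_def)
  have same: "gs!j = fs!j" if "j < m+n+r" "\<And>i. zpos m n j i \<Longrightarrow> i \<noteq> p \<and> i \<noteq> Suc p" for j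
    unfolding fs_def gs_def by (rule hfactors_local) (use that in \<open>auto simp: sw\<close>)
  have central: "1 * x = x * 1" for x :: "'k R" by simp
  have "Suc p < n \<or> Suc p = n \<or> (\<exists>q. p = n+2*q) \<or> (\<exists>q. p = n+2*q+1)"
    by presburger
  then consider (YZ_YZ) "Suc p < n" | (YZ_ZZ) "Suc p = n" | (ZZ) q where "p = n+2*q"
    | (ZZ_ZZ) q where "p = n+2*q+1"
    by blast
  then have "prod_list gs = 1 * prod_list fs"
  proof cases
    case YZ_YZ
    show ?thesis
    proof (rule prod_list_change_pair[OF len(1) _ _ _ central])
      show "Suc (m+p) < length fs" using YZ_YZ len by simp
      show "gs!j = fs!j" if "j < length fs" "j \<noteq> m+p" "j \<noteq> Suc (m+p)" for j
        using that YZ_YZ len by (intro same) (auto simp: zpos_def)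
      show "gs!(m+p) * gs!Suc (m+p) = 1 * (fs!(m+p) * fs!Suc (m+p))"
        using YZ_YZ cYZ_exchange_z[of "ys!(m+(m+p))" "zs!Suc p" "ys!Suc (m+(m+p))" "zs!p"]
        by (simp add: fs_def gs_def nth_hfactors sw)
    qed
  next
    case YZ_ZZ
    have r: "0 < r" using p YZ_ZZ by simp
    show ?thesis
    proof (rule prod_list_change_pair[OF len(1) _ _ _ central])
      show "Suc (m+p) < length fs" using YZ_ZZ r len by simp
      show "gs!j = fs!j" if "j < length fs" "j \<noteq> m+p" "j \<noteq> Suc (m+p)" for j
        using that YZ_ZZ len by (intro same) (auto simp: zpos_def)
      show "gs!(m+p) * gs!Suc (m+p) = 1 * (fs!(m+p) * fs!Suc (m+p))"
        using YZ_ZZ r cYZ_jZZ_exchange[of "ys!(m+(m+p))" "zs!p" "zs!Suc p" "zs!Suc n", symmetric]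
        by (simp add: fs_def gs_def nth_hfactors sw)
    qed
  next
    case ZZ
    show ?thesis
    proof (rule prod_list_change_one[OF len(1) _ _ _ central])
      show "m+n+q < length fs" using ZZ p len by simp
      show "gs!j = fs!j" if "j < length fs" "j \<noteq> m+n+q" for j
        using that ZZ len by (intro same) (auto simp: zpos_def)
      show "gs!(m+n+q) = 1 * fs!(m+n+q)"
        using ZZ p jZZ_sym[of "zs!Suc p" "zs!p"] by (simp add: fs_def gs_def nth_hfactors sw)
    qed
  next
    case ZZ_ZZ
    show ?thesis
    proof (rule prod_list_change_pair[OF len(1) _ _ _ central])
      show "Suc (m+n+q) < length fs" using ZZ_ZZ p len by simp
      show "gs!j = fs!j" if "j < length fs" "j \<noteq> m+n+q" "j \<noteq> Suc (m+n+q)" for j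
        using that ZZ_ZZ len by (intro same) (auto simp: zpos_def)
      show "gs!(m+n+q) * gs!Suc (m+n+q) = 1 * (fs!(m+n+q) * fs!Suc (m+n+q))"
        using ZZ_ZZ p jZZ_exchange[of "zs!(n+2*q)" "zs!(n+2*q+1)" "zs!(n+2*q+2)" "zs!(n+2*q+3)", symmetric]
        by (simp add: fs_def gs_def nth_hfactors sw numeral_eq_Suc)
    qed
  qed
  then show ?thesis by (simp add: hR_def fs_def gs_def zs'_def)
qed

lemma hR_antisymmetric: "swap_equivariant (\<lambda>ys. hR m n r ys zs :: 'k::field R) uminus (2*m+n)"
  unfolding swap_equivariant_def using hR_swap_ys by blast

lemma hR_symmetric: "swap_equivariant (\<lambda>zs. hR m n r ys zs :: 'k::field R) id (n+2*r)"
  unfolding swap_equivariant_def using hR_swap_zs by fastforce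

inductive_set kspan :: "'k::field R set \<Rightarrow> 'k R set" for S where
  zero: "0 \<in> kspan S"
| base: "s \<in> S \<Longrightarrow> s \<in> kspan S"
| add: "u \<in> kspan S \<Longrightarrow> v \<in> kspan S \<Longrightarrow> u + v \<in> kspan S"
| scal: "u \<in> kspan S \<Longrightarrow> scal c * u \<in> kspan S"

lemma scal_minus_one: "scal (-1) = (-1 :: 'k::field R)"
proof -
  have "scal (-1) + 1 = (0 :: 'k R)" by (simp add: scal_add scal_one[symmetric] scal_zero)
  then show ?thesis by (simp add: eq_neg_iff_add_eq_0)
qed

lemma kspan_uminus: "u \<in> kspan S \<Longrightarrow> - u \<in> kspan S"
  using kspan.scal[of u S "-1"] by (simp add: scal_minus_one)

lemma kspan_diff: "u \<in> kspan S \<Longrightarrow> v \<in> kspan S \<Longrightarrow> u - v \<in> kspan S"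
  using kspan.add[of u S "-v"] kspan_uminus[of v S] by simp

lemma kspan_signed: "u \<in> kspan S \<Longrightarrow> signed n u \<in> kspan S"
  by (simp add: signed_def kspan_uminus)

lemma kspan_subset: "x \<in> kspan S \<Longrightarrow> S \<subseteq> kspan T \<Longrightarrow> x \<in> kspan T"
  by (induct x rule: kspan.induct) (auto intro: kspan.intros)

lemma kspan_mult_right:
  "x \<in> kspan S \<Longrightarrow> (\<And>s. s \<in> S \<Longrightarrow> s * b \<in> kspan T) \<Longrightarrow> x * b \<in> kspan T"
  by (induct x rule: kspan.induct) (auto simp: distrib_right mult.assoc intro: kspan.intros)

lemma kspan_mult_left:
  "x \<in> kspan S \<Longrightarrow> (\<And>s. s \<in> S \<Longrightarrow> b * s \<in> kspan T) \<Longrightarrow> b * x \<in> kspan T"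
proof (induct x rule: kspan.induct)
  case (scal u c)
  have "b * (scal c * u) = scal c * (b * u)" by (metis mult.assoc scal_central)
  then show ?case using scal by (simp add: kspan.scal)
qed (auto simp: distrib_left intro: kspan.intros)

text \<open>Division by 2 is available: it kills elements equal to their negatives and
  expresses \<open>z_j z_j\<close> through \<open>z_j \<circ> z_j\<close>.\<close>
lemma half_double: assumes "(2::'k::field) \<noteq> 0" shows "scal (1/2) * (u + u) = (u :: 'k R)"
proof -
  have "scal (1/2) * (u + u) = (scal (1/2) + scal (1/2)) * u" by (simp add: algebra_simps)
  then show ?thesis using assms by (simp add: scal_add scal_one)
qed

lemma self_neg_zero: assumes "(2::'k::field) \<noteq> 0" and "u = - u" shows "u = (0 :: 'k R)"
proof -
  have "u + u = 0" using assms(2) by (metis add.right_inverse)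
  then show ?thesis using half_double[OF assms(1), of u] by simp
qed

lemma Z_square: assumes "(2::'k::field) \<noteq> 0" shows "Z j * Z j = scal (1/2) * (jZZ j j :: 'k R)"
  using half_double[OF assms, of "Z j * Z j"] by (simp add: jZZ_def rjord_def)

definition normal_idx :: "nat \<Rightarrow> nat \<Rightarrow> nat \<Rightarrow> nat list \<Rightarrow> nat list \<Rightarrow> bool" where
  "normal_idx m n r ys zs \<longleftrightarrow> length ys = 2*m+n \<and> sorted_wrt (<) ys \<and> length zs = n+2*r \<and> sorted zs"

definition normal_h :: "'k::field R set" where
  "normal_h = {hR m n r ys zs | m n r ys zs. normal_idx m n r ys zs}"

lemma hR_in_normal_span:
  assumes two: "(2::'k::field) \<noteq> 0" and l: "length ys = 2*m+n" "length zs = n+2*r"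
  shows "(hR m n r ys zs :: 'k R) \<in> kspan normal_h"
proof (cases "distinct ys")
  case False
  have "(hR m n r ys zs :: 'k R) = 0"
  proof (rule antisymmetric_repeated_zero[where f = "\<lambda>ys. hR m n r ys zs"])
    show "swap_equivariant (\<lambda>ys. hR m n r ys zs :: 'k R) uminus (length ys)"
      using hR_antisymmetric[of m n r zs] l(1) by simp
  qed (use False self_neg_zero[OF two] in auto)
  then show ?thesis by (simp add: kspan.zero)
next
  case True
  have sign: "hR m n r ys zs = (hR m n r (sort ys) zs :: 'k R) \<or> hR m n r ys zs = - (hR m n r (sort ys) zs :: 'k R)"
    using swap_equivariant_sort[of "\<lambda>ys. hR m n r ys zs" uminus ys] hR_antisymmetric[of m n r zs] l(1) by simp
  have "hR m n r (sort ys) zs = (hR m n r (sort ys) (sort zs) :: 'k R)"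
    using swap_equivariant_sort[of "\<lambda>zs. hR m n r (sort ys) zs" id zs] hR_symmetric[of m n r "sort ys"] l(2) by simp
  moreover have "(hR m n r (sort ys) (sort zs) :: 'k R) \<in> normal_h"
    unfolding normal_h_def normal_idx_def using True l
    by (intro CollectI exI[of _ m] exI[of _ n] exI[of _ r] exI[of _ "sort ys"] exI[of _ "sort zs"])
       (simp add: strict_sorted_iff)
  ultimately have "(hR m n r (sort ys) zs :: 'k R) \<in> kspan normal_h" by (simp add: kspan.base)
  then show ?thesis using sign kspan_uminus by auto
qed

lemma prod_list_map_cong:
  "(\<And>j. j < m \<Longrightarrow> g j = f j) \<Longrightarrow> prod_list (map g [0..<m]) = prod_list (map f [0..<m])"
  by (rule arg_cong[where f=prod_list], rule map_cong) auto

text \<open>Right multiplication of h by a letter: \<open>[y,y]\<close> is moved to the \<open>[y,y]\<close>-block,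
  \<open>[y,z]\<close> to the \<open>[y,z]\<close>-block (past the central \<open>z \<circ> z\<close>), and \<open>z \<circ> z\<close> stays at the end.\<close>
lemma hR_times_cYY:
  assumes l: "length ys = 2*m+n"
  shows "hR m n r ys zs * cYY a b = (hR (Suc m) n r (take (2*m) ys @ a # b # drop (2*m) ys) zs :: 'k::field R)"
proof -
  define ys' where "ys' = take (2*m) ys @ a # b # drop (2*m) ys"
  have n1: "ys' ! i = ys ! i" if "i < 2*m" for i using that l by (simp add: ys'_def nth_append)
  have n2: "ys' ! (2*m) = a" "ys' ! Suc (2*m) = b" using l by (simp_all add: ys'_def nth_append)
  have n3: "ys' ! (Suc (Suc (2*m)) + k) = ys ! (2*m+k)" for k using l by (simp add: ys'_def nth_append)
  have A: "prod_list (map (facYY ys') [0..<Suc m]) = prod_list (map (facYY ys) [0..<m]) * (cYY a b :: 'k R)"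
  proof -
    have "prod_list (map (facYY ys') [0..<m]) = (prod_list (map (facYY ys) [0..<m]) :: 'k R)"
      by (rule prod_list_map_cong) (simp add: facYY_def n1)
    moreover have "facYY ys' m = (cYY a b :: 'k R)" by (simp add: facYY_def n2)
    ultimately show ?thesis by simp
  qed
  have B: "prod_list (map (facYZ (Suc m) ys' zs) [0..<n]) = (prod_list (map (facYZ m ys zs) [0..<n]) :: 'k R)"
  proof (rule prod_list_map_cong)
    fix j
    have "2 * Suc m + j = Suc (Suc (2*m)) + j" by simp
    then show "facYZ (Suc m) ys' zs j = facYZ m ys zs j" by (simp only: facYZ_def n3)
  qed
  have central_B: "cYY a b * prod_list (map (facYZ m ys zs) [0..<n]) = prod_list (map (facYZ m ys zs) [0..<n]) * (cYY a b :: 'k R)"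
    by (rule commute_prod_list) (auto simp: facYZ_def cYY_cYZ)
  have central_C: "cYY a b * prod_list (map (facZZ n zs) [0..<r]) = prod_list (map (facZZ n zs) [0..<r]) * (cYY a b :: 'k R)"
    by (rule commute_prod_list) (auto simp: facZZ_def cYY_jZZ)
  have "hR m n r ys zs * cYY a b = prod_list (map (facYY ys) [0..<m])
      * (prod_list (map (facYZ m ys zs) [0..<n]) * (prod_list (map (facZZ n zs) [0..<r]) * (cYY a b :: 'k R)))"
    by (simp add: hR_blocks mult.assoc)
  also have "\<dots> = prod_list (map (facYY ys) [0..<m])
      * (cYY a b * (prod_list (map (facYZ m ys zs) [0..<n]) * prod_list (map (facZZ n zs) [0..<r])))"
    by (simp add: central_B[symmetric] central_C[symmetric] mult.assoc[symmetric])
  also have "\<dots> = hR (Suc m) n r ys' zs"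
    unfolding hR_blocks A B by (simp add: mult.assoc)
  finally show ?thesis by (simp add: ys'_def)
qed

lemma hR_times_cYZ:
  assumes l: "length ys = 2*m+n" and lz: "length zs = n+2*r"
  shows "hR m n r ys zs * cYZ a b = (hR m (Suc n) r (ys @ [a]) (take n zs @ b # drop n zs) :: 'k::field R)"
proof -
  define zs' where "zs' = take n zs @ b # drop n zs"
  have A: "prod_list (map (facYY (ys@[a])) [0..<m]) = (prod_list (map (facYY ys) [0..<m]) :: 'k R)"
  proof (rule prod_list_map_cong)
    fix j assume "j < m"
    then have "2*j < length ys" "Suc (2*j) < length ys" using l by linarith+
    then show "facYY (ys@[a]) j = facYY ys j" by (simp add: facYY_def nth_append)
  qed
  have B: "prod_list (map (facYZ m (ys@[a]) zs') [0..<Suc n]) = prod_list (map (facYZ m ys zs) [0..<n]) * (cYZ a b :: 'k R)"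
  proof -
    have "prod_list (map (facYZ m (ys@[a]) zs') [0..<n]) = (prod_list (map (facYZ m ys zs) [0..<n]) :: 'k R)"
    proof (rule prod_list_map_cong)
      fix j assume "j < n"
      then have "2*m+j < length ys" "j < length (take n zs)" using l lz by auto
      then show "facYZ m (ys@[a]) zs' j = facYZ m ys zs j" by (simp add: facYZ_def nth_append zs'_def)
    qed
    moreover have "facYZ m (ys@[a]) zs' n = (cYZ a b :: 'k R)" using l lz by (simp add: facYZ_def nth_append zs'_def)
    ultimately show ?thesis by simp
  qed
  have C: "prod_list (map (facZZ (Suc n) zs') [0..<r]) = (prod_list (map (facZZ n zs) [0..<r]) :: 'k R)"
  proof (rule prod_list_map_cong)
    fix j
    have "zs' ! (Suc n + i) = zs ! (n + i)" for i using lz by (simp add: zs'_def nth_append)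
    from this[of "2*j"] this[of "2*j+1"] show "facZZ (Suc n) zs' j = facZZ n zs j" by (simp add: facZZ_def)
  qed
  have central_C: "cYZ a b * prod_list (map (facZZ n zs) [0..<r]) = prod_list (map (facZZ n zs) [0..<r]) * (cYZ a b :: 'k R)"
    by (rule commute_prod_list) (auto simp: facZZ_def cYZ_jZZ)
  have "hR m n r ys zs * cYZ a b = prod_list (map (facYY ys) [0..<m])
      * (prod_list (map (facYZ m ys zs) [0..<n]) * (prod_list (map (facZZ n zs) [0..<r]) * (cYZ a b :: 'k R)))"
    by (simp add: hR_blocks mult.assoc)
  also have "\<dots> = prod_list (map (facYY ys) [0..<m])
      * ((prod_list (map (facYZ m ys zs) [0..<n]) * cYZ a b) * prod_list (map (facZZ n zs) [0..<r]))"
    by (simp add: central_C[symmetric] mult.assoc)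
  also have "\<dots> = hR m (Suc n) r (ys@[a]) zs'"
    by (simp only: hR_blocks A B C)
  finally show ?thesis by (simp add: zs'_def)
qed

lemma hR_times_jZZ:
  assumes lz: "length zs = n+2*r"
  shows "hR m n r ys zs * jZZ a b = (hR m n (Suc r) ys (zs @ [a, b]) :: 'k::field R)"
proof -
  have B: "prod_list (map (facYZ m ys (zs@[a,b])) [0..<n]) = (prod_list (map (facYZ m ys zs) [0..<n]) :: 'k R)"
    by (rule prod_list_map_cong) (use lz in \<open>simp add: facYZ_def nth_append\<close>)
  have C: "prod_list (map (facZZ n (zs@[a,b])) [0..<Suc r]) = prod_list (map (facZZ n zs) [0..<r]) * (jZZ a b :: 'k R)"
  proof -
    have "prod_list (map (facZZ n (zs@[a,b])) [0..<r]) = (prod_list (map (facZZ n zs) [0..<r]) :: 'k R)"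
      by (rule prod_list_map_cong) (use lz in \<open>simp add: facZZ_def nth_append\<close>)
    moreover have "facZZ n (zs@[a,b]) r = (jZZ a b :: 'k R)" using lz by (simp add: facZZ_def nth_append)
    ultimately show ?thesis by simp
  qed
  show ?thesis unfolding hR_blocks B C by (simp add: mult.assoc)
qed

definition zprod :: "nat list \<Rightarrow> 'k::field R" where "zprod ks = prod_list (map Z ks)"

definition normal_g :: "nat set \<Rightarrow> 'k::field R set" where
  "normal_g T = {hR m n r ys zs * zprod ks | m n r ys zs ks.
                  normal_idx m n r ys zs \<and> sorted_wrt (<) ks \<and> set ks \<subseteq> T}"

lemma normal_gI:
  "normal_idx m n r ys zs \<Longrightarrow> sorted_wrt (<) ks \<Longrightarrow> set ks \<subseteq> T \<Longrightarrow> hR m n r ys zs * zprod ks \<in> normal_g T"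
  unfolding normal_g_def by blast

lemma kspan_normal_g_mono: "T \<subseteq> T' \<Longrightarrow> x \<in> kspan (normal_g T) \<Longrightarrow> x \<in> kspan (normal_g T')"
proof -
  assume "T \<subseteq> T'" "x \<in> kspan (normal_g T)"
  moreover from \<open>T \<subseteq> T'\<close> have "normal_g T \<subseteq> normal_g T'" unfolding normal_g_def by blast
  ultimately show ?thesis using kspan_subset kspan.base by blast
qed

lemma normal_span_times_zprod:
  "x \<in> kspan normal_h \<Longrightarrow> sorted_wrt (<) ks \<Longrightarrow> set ks \<subseteq> T \<Longrightarrow> x * zprod ks \<in> kspan (normal_g T)"
  by (erule kspan_mult_right) (auto simp: normal_h_def intro!: kspan.base normal_gI)

lemma zprod_snoc: "zprod (ks @ [k]) = zprod ks * Z k" by (simp add: zprod_def)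

lemma zprod_jZZ: "zprod ks * jZZ a b = jZZ a b * (zprod ks :: 'k::field R)"
  unfolding zprod_def by (rule commute_prod_list[symmetric]) (auto simp: jZZ_Z)

lemma normal_times_jZZ_zprod:
  assumes two: "(2::'k::field) \<noteq> 0" and h: "normal_idx m n r ys zs" and ks: "sorted_wrt (<) ks" "set ks \<subseteq> T"
  shows "hR m n r ys zs * jZZ a b * zprod ks \<in> kspan (normal_g T :: 'k R set)"
proof -
  have "hR m n r ys zs * jZZ a b = (hR m n (Suc r) ys (zs @ [a, b]) :: 'k R)"
    using h by (intro hR_times_jZZ) (simp add: normal_idx_def)
  moreover have "(hR m n (Suc r) ys (zs @ [a, b]) :: 'k R) \<in> kspan normal_h"
    using h by (intro hR_in_normal_span[OF two]) (simp_all add: normal_idx_def)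
  ultimately show ?thesis using normal_span_times_zprod ks by metis
qed

text \<open>Inserting \<open>z_j\<close> into a strictly increasing z-tail, by induction on the tail from the
  right: \<open>z_k z_j\<close> is kept for \<open>k < j\<close>, \<open>z_j z_j = (z_j \<circ> z_j)/2\<close>, and for \<open>j < k\<close>
  \<open>z_k z_j = z_k \<circ> z_j - z_j z_k\<close>; the central \<open>z \<circ> z\<close> is absorbed into h.\<close>
lemma normal_times_Z:
  assumes two: "(2::'k::field) \<noteq> 0" and h: "normal_idx m n r ys zs"
  shows "sorted_wrt (<) ks \<Longrightarrow> hR m n r ys zs * zprod ks * Z j \<in> kspan (normal_g (insert j (set ks)) :: 'k R set)"
proof (induct ks rule: rev_induct)
  case Nil
  have "hR m n r ys zs * zprod [] * Z j = hR m n r ys zs * (zprod [j] :: 'k R)" by (simp add: zprod_def)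
  also have "\<dots> \<in> normal_g (insert j (set []))" using h by (intro normal_gI) auto
  finally show ?case by (rule kspan.base)
next
  case (snoc k ks)
  let ?H = "hR m n r ys zs :: 'k R"
  let ?T = "insert j (set (ks @ [k]))"
  have sk: "sorted_wrt (<) ks" and lt: "\<forall>x\<in>set ks. x < k" using snoc.prems by (auto simp: sorted_wrt_append)
  have absorb: "?H * jZZ a b * zprod ks \<in> kspan (normal_g ?T)" for a b
    using normal_times_jZZ_zprod[OF two h sk, of "set ks" a b] kspan_normal_g_mono[of "set ks" ?T] by auto
  have tail: "?H * zprod (ks @ [k]) * Z j = ?H * zprod ks * (Z k * Z j)" by (simp add: zprod_snoc mult.assoc)
  consider "k < j" | "k = j" | "j < k" by arith
  then show ?case
  proof cases
    case 1
    have "?H * zprod (ks @ [k]) * Z j = ?H * zprod (ks @ [k, j])" by (simp add: zprod_def mult.assoc)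
    also have "\<dots> \<in> normal_g ?T" using h snoc.prems 1
      by (intro normal_gI) (auto simp: sorted_wrt_append)
    finally show ?thesis by (rule kspan.base)
  next
    case 2
    have "?H * zprod (ks @ [k]) * Z j = ?H * zprod ks * (scal (1/2) * jZZ j j)"
      using tail 2 by (simp only: Z_square[OF two])
    also have "\<dots> = ?H * ((zprod ks * scal (1/2)) * jZZ j j)" by (simp only: mult.assoc)
    also have "\<dots> = (?H * scal (1/2)) * (zprod ks * jZZ j j)" by (simp only: mult.assoc scal_central)
    also have "\<dots> = (scal (1/2) * ?H) * (jZZ j j * zprod ks)" by (simp only: scal_central zprod_jZZ)
    also have "\<dots> = scal (1/2) * (?H * jZZ j j * zprod ks)" by (simp only: mult.assoc)
    finally show ?thesis using absorb[of j j] by (simp add: kspan.scal)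
  next
    case 3
    have "?H * zprod (ks @ [k]) * Z j = ?H * zprod ks * (jZZ k j - Z j * Z k)"
      using tail by (simp add: jZZ_def rjord_def)
    also have "\<dots> = ?H * jZZ k j * zprod ks - (?H * zprod ks * Z j) * Z k"
      by (simp add: algebra_simps zprod_jZZ)
    finally have split: "?H * zprod (ks @ [k]) * Z j = ?H * jZZ k j * zprod ks - (?H * zprod ks * Z j) * Z k" .
    have "(?H * zprod ks * Z j) * Z k \<in> kspan (normal_g ?T)"
    proof (rule kspan_mult_right[OF snoc.hyps[OF sk]])
      fix s assume "s \<in> normal_g (insert j (set ks))"
      then obtain m' n' r' ys' zs' ks' where s: "s = hR m' n' r' ys' zs' * zprod ks'" and
        h': "normal_idx m' n' r' ys' zs'" "sorted_wrt (<) ks'" "set ks' \<subseteq> insert j (set ks)"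
        unfolding normal_g_def by blast
      have "s * Z k = hR m' n' r' ys' zs' * zprod (ks' @ [k])" by (simp add: s zprod_snoc mult.assoc)
      also have "\<dots> \<in> normal_g ?T" using h' lt 3
        by (intro normal_gI) (auto simp: sorted_wrt_append)
      finally show "s * Z k \<in> kspan (normal_g ?T)" by (rule kspan.base)
    qed
    then show ?thesis unfolding split using absorb[of k j] by (simp add: kspan_diff)
  qed
qed

section \<open>Words in letters\<close>

datatype letter = LYY nat nat | LYZ nat nat | LZ nat

fun eval_letter :: "letter \<Rightarrow> 'k::field R" where
  "eval_letter (LYY a b) = cYY a b"
| "eval_letter (LYZ a b) = cYZ a b"
| "eval_letter (LZ j) = Z j"

definition eval_word :: "letter list \<Rightarrow> 'k::field R" where
  "eval_word ws = prod_list (map eval_letter ws)"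

lemma normal_times_letter:
  assumes two: "(2::'k::field) \<noteq> 0" and g: "g \<in> normal_g UNIV"
  shows "g * eval_letter l \<in> kspan (normal_g UNIV :: 'k R set)"
proof -
  obtain m n r ys zs ks where g_eq: "g = hR m n r ys zs * zprod ks"
    and h: "normal_idx m n r ys zs" and ks: "sorted_wrt (<) ks"
    using g unfolding normal_g_def by blast
  have l: "length ys = 2*m+n" "length zs = n+2*r" using h by (simp_all add: normal_idx_def)
  show ?thesis
  proof (cases l)
    case (LZ j)
    have "g * eval_letter l \<in> kspan (normal_g (insert j (set ks)) :: 'k R set)"
      unfolding g_eq LZ using normal_times_Z[OF two h ks] by simp
    then show ?thesis by (rule kspan_normal_g_mono[rotated]) simp
  next
    case (LYY a b)
    have c: "zprod ks * cYY a b = cYY a b * (zprod ks :: 'k R)"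
      unfolding zprod_def by (rule commute_prod_list[symmetric]) (auto simp: cYY_Z)
    have "g * eval_letter l = (hR m n r ys zs * cYY a b) * zprod ks" unfolding g_eq LYY by (simp add: mult.assoc c)
    also have "\<dots> = hR (Suc m) n r (take (2*m) ys @ a # b # drop (2*m) ys) zs * zprod ks"
      by (simp only: hR_times_cYY[OF l(1)])
    also have "\<dots> \<in> kspan (normal_g UNIV)"
      by (rule normal_span_times_zprod[OF hR_in_normal_span[OF two] ks]) (use l in simp_all)
    finally show ?thesis .
  next
    case (LYZ a b)
    have c: "zprod ks * cYZ a b = signed (length ks) (cYZ a b * (zprod ks :: 'k R))"
      unfolding zprod_def using anticommute_prod_list[of "map Z ks" "cYZ a b"] by (simp add: cYZ_Z)
    have "g * eval_letter l = signed (length ks) ((hR m n r ys zs * cYZ a b) * zprod ks)"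
      unfolding g_eq LYZ by (simp add: mult.assoc c signed_mult_left)
    also have "\<dots> = signed (length ks) (hR m (Suc n) r (ys @ [a]) (take n zs @ b # drop n zs) * zprod ks)"
      by (simp only: hR_times_cYZ[OF l])
    also have "\<dots> \<in> kspan (normal_g UNIV)"
      by (rule kspan_signed, rule normal_span_times_zprod[OF hR_in_normal_span[OF two] ks]) (use l in simp_all)
    finally show ?thesis .
  qed
qed

lemma word_in_normal_span:
  assumes two: "(2::'k::field) \<noteq> 0"
  shows "(eval_word ws :: 'k R) \<in> kspan (normal_g UNIV)"
proof (induct ws rule: rev_induct)
  case Nil
  have "(eval_word [] :: 'k R) = hR 0 0 0 [] [] * zprod []"
    by (simp add: eval_word_def hR_def hfactors_def zprod_def)
  also have "\<dots> \<in> normal_g UNIV" by (rule normal_gI) (simp_all add: normal_idx_def)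
  finally show ?case by (rule kspan.base)
next
  case (snoc l ws)
  have "(eval_word (ws @ [l]) :: 'k R) = eval_word ws * eval_letter l" by (simp add: eval_word_def)
  also have "\<dots> \<in> kspan (normal_g UNIV)"
    by (rule kspan_mult_right[OF snoc]) (rule normal_times_letter[OF two])
  finally show ?case .
qed

abbreviation word_span :: "'k::field R set" where "word_span \<equiv> kspan (range eval_word)"

lemma eval_word_in_span: "eval_word ws \<in> word_span" by (rule kspan.base) simp

lemma word_span_mult: "u \<in> word_span \<Longrightarrow> v \<in> word_span \<Longrightarrow> u * v \<in> (word_span :: 'k::field R set)"
proof (erule kspan_mult_right)
  fix s :: "'k R" assume v: "v \<in> word_span" and "s \<in> range eval_word"
  then obtain a where s: "s = eval_word a" by blast
  show "s * v \<in> word_span"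
  proof (rule kspan_mult_left[OF v])
    fix t :: "'k R" assume "t \<in> range eval_word"
    then obtain b where t: "t = eval_word b" by blast
    show "s * t \<in> word_span" unfolding s t using eval_word_in_span[of "a @ b"] by (simp add: eval_word_def)
  qed
qed

definition is_var :: "'k::field R \<Rightarrow> bool" where "is_var v \<longleftrightarrow> (\<exists>d. v = Y d) \<or> (\<exists>d. v = Z d)"

text \<open>Commuting a letter with a variable gives a combination of words: by relations (1), (2)
  it is zero or \<open>\<plusminus>[y,z]\<close>, by (3) \<open>[[y,z],z] = 2[y,z]z\<close>, and \<open>[z,z'] = zz' - z'z\<close>.\<close>
lemma rcomm_letter_var: "is_var v \<Longrightarrow> rcomm (eval_letter l :: 'k::field R) v \<in> word_span"
proof -
  assume "is_var v"
  then consider d where "v = Y d" | d where "v = Z d" unfolding is_var_def by blast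
  then show ?thesis
  proof cases
    case 1
    show ?thesis
    proof (cases l)
      case (LYY a b)
      have "rcomm (eval_letter l) v = (0 :: 'k R)" using 1 rel1a[of a b d] LYY by (simp add: cYY_def)
      then show ?thesis by (simp add: kspan.zero)
    next
      case (LYZ a b)
      have "rcomm (eval_letter l) v = (0 :: 'k R)" using 1 rel2[of a b d] LYZ by (simp add: cYZ_def)
      then show ?thesis by (simp add: kspan.zero)
    next
      case (LZ a)
      have "rcomm (eval_letter l) v = - eval_word [LYZ d a]" using LZ 1 by (simp add: eval_word_def rcomm_Z_Y)
      then show ?thesis using kspan_uminus[OF eval_word_in_span] by simp
    qed
  next
    case 2
    show ?thesis
    proof (cases l)
      case (LYY a b)
      have "rcomm (eval_letter l) v = (0 :: 'k R)" using 2 rel1b[of a b d] LYY by (simp add: cYY_def)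
      then show ?thesis by (simp add: kspan.zero)
    next
      case (LYZ a b)
      have "rcomm (eval_letter l) v = eval_word [LYZ a b, LZ d] + eval_word [LYZ a b, LZ d]"
        using LYZ 2 by (simp add: eval_word_def rcomm_def cYZ_Z)
      then show ?thesis using kspan.add[OF eval_word_in_span eval_word_in_span] by simp
    next
      case (LZ a)
      have "rcomm (eval_letter l) v = eval_word [LZ a, LZ d] - eval_word [LZ d, LZ a]"
        using LZ 2 by (simp add: eval_word_def rcomm_def)
      then show ?thesis using kspan_diff[OF eval_word_in_span eval_word_in_span] by simp
    qed
  qed
qed

text \<open>By the Leibniz rule \<open>[uw, v] = u[w, v] + [u, v]w\<close> the property extends to words.\<close>
lemma rcomm_word_var: "is_var v \<Longrightarrow> rcomm (eval_word ws) v \<in> (word_span :: 'k::field R set)"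
proof (induct ws)
  case Nil then show ?case by (simp add: eval_word_def rcomm_def kspan.zero)
next
  case (Cons l ws)
  have "rcomm (eval_word (l # ws)) v = eval_letter l * rcomm (eval_word ws) v + rcomm (eval_letter l) v * eval_word ws"
    by (simp add: eval_word_def rcomm_def algebra_simps)
  moreover have "eval_letter l * rcomm (eval_word ws) v \<in> (word_span :: 'k R set)"
    using word_span_mult[OF eval_word_in_span[of "[l]"] Cons.hyps[OF Cons.prems]] by (simp add: eval_word_def)
  moreover have "rcomm (eval_letter l) v * eval_word ws \<in> (word_span :: 'k R set)"
    by (rule word_span_mult[OF rcomm_letter_var[OF Cons.prems] eval_word_in_span])
  ultimately show ?case by (simp add: kspan.add)
qed

lemma rcomm_word_span_var: "x \<in> word_span \<Longrightarrow> is_var v \<Longrightarrow> rcomm x v \<in> (word_span :: 'k::field R set)"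
proof (induct x rule: kspan.induct)
  case zero then show ?case by (simp add: rcomm_def kspan.zero)
next
  case (base s) then show ?case using rcomm_word_var by blast
next
  case (add u w)
  have "rcomm (u + w) v = rcomm u v + rcomm w v" by (simp add: rcomm_def algebra_simps)
  then show ?case using add by (simp add: kspan.add)
next
  case (scal u c)
  have "v * (scal c * u) = scal c * (v * u)" by (metis mult.assoc scal_central)
  then have "rcomm (scal c * u) v = scal c * rcomm u v"
    by (simp add: rcomm_def right_diff_distrib mult.assoc)
  then show ?case using scal by (simp add: kspan.scal)
qed

lemma abs_fvar_is_var: "is_var (abs_R (fvar x) :: 'k::field R)"
  by (cases x) (auto simp: is_var_def abs_Y abs_Z)

lemma lcomm_in_word_span: "xs \<noteq> [] \<Longrightarrow> (abs_R (lcomm x xs) :: 'k::field R) \<in> word_span"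
proof (induct xs rule: rev_induct)
  case (snoc w xs)
  have step: "(abs_R (lcomm x (xs @ [w])) :: 'k R) = rcomm (abs_R (lcomm x xs)) (abs_R (fvar w))"
    by (simp add: lcomm_def abs_comm)
  show ?case
  proof (cases "xs = []")
    case False
    then show ?thesis unfolding step by (rule rcomm_word_span_var[OF snoc(1) abs_fvar_is_var])
  next
    case True
    then have step': "(abs_R (lcomm x (xs @ [w])) :: 'k R) = rcomm (abs_R (fvar x)) (abs_R (fvar w))"
      using step by (simp add: lcomm_def)
    show ?thesis
    proof (cases x)
      case (Yv a)
      show ?thesis
      proof (cases w)
        case (Yv b)
        then show ?thesis using step' eval_word_in_span[of "[LYY a b]"] \<open>x = Yv a\<close>
          by (simp add: eval_word_def abs_Y cYY_def)
      next
        case (Zv b)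
        then show ?thesis using step' eval_word_in_span[of "[LYZ a b]"] \<open>x = Yv a\<close>
          by (simp add: eval_word_def abs_Y abs_Z cYZ_def)
      qed
    next
      case (Zv a)
      have "rcomm (eval_word [LZ a]) (abs_R (fvar w)) \<in> (word_span :: 'k R set)"
        by (rule rcomm_word_var[OF abs_fvar_is_var])
      then show ?thesis using step' Zv by (simp add: eval_word_def abs_Z)
    qed
  qed
qed simp

text \<open>Step (3): the span of words is a subalgebra containing Z and all commutators.\<close>
lemma Y_proper_in_word_span: "p \<in> Y_proper \<Longrightarrow> (abs_R p :: 'k::field R) \<in> word_span"
proof (induct p rule: Y_proper.induct)
  case (const c)
  have "(abs_R (fconst c) :: 'k R) = scal c * eval_word []" by (simp add: fconst_def scal_def eval_word_def)
  then show ?case using kspan.scal[OF eval_word_in_span] by metis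
next
  case (zvar j)
  have "(abs_R (fvar (Zv j)) :: 'k R) = eval_word [LZ j]" by (simp add: abs_Z eval_word_def)
  then show ?case using eval_word_in_span by metis
next
  case (commutator xs x) then show ?case by (rule lcomm_in_word_span)
next
  case (add p q) then show ?case by (simp add: abs_add kspan.add)
next
  case (smult p c) then show ?case by (simp add: abs_fsmult kspan.scal)
next
  case (mult p q) then show ?case by (simp add: fmul_eq abs_mult word_span_mult)
qed

section \<open>Lifting back to the free algebra\<close>

lemma abs_hpoly: "abs_R (hpoly m n r ys zs) = (hR m n r ys zs :: 'k::field R)"
  by (simp add: hpoly_def hR_blocks fmul_eq abs_mult abs_fprod o_def abs_comm abs_jordan
      facYY_def[abs_def] facYZ_def[abs_def] facZZ_def[abs_def]
      cYY_def cYZ_def jZZ_def Y_def[symmetric] Z_def[symmetric])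

lemma abs_gpoly: "abs_R (gpoly m n r ys zs ks) = (hR m n r ys zs * zprod ks :: 'k::field R)"
  by (simp add: gpoly_def fmul_eq abs_mult abs_hpoly abs_fprod o_def zprod_def Z_def[symmetric])

lemma normal_g_images: "normal_g UNIV \<subseteq> abs_R ` (G_set :: 'k::field fpoly set)"
proof
  fix x :: "'k R" assume "x \<in> normal_g UNIV"
  then obtain m n r ys zs ks where x: "x = hR m n r ys zs * zprod ks"
    and h: "normal_idx m n r ys zs" and ks: "sorted_wrt (<) ks"
    unfolding normal_g_def by blast
  have "gpoly m n r ys zs ks \<in> (G_set :: 'k fpoly set)"
    unfolding G_set_def using h ks unfolding normal_idx_def by blast
  then show "x \<in> abs_R ` G_set" using x abs_gpoly by (metis image_eqI)
qed

lemma kspan_images: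
  "x \<in> kspan (abs_R ` A) \<Longrightarrow> \<exists>F c. F \<subseteq> A \<and> finite F \<and> x = abs_R (\<Sum>g\<in>F. fsmult (c g) g)"
proof (induct x rule: kspan.induct)
  case zero
  show ?case by (rule exI[of _ "{}"]) (simp add: abs_zero)
next
  case (base s)
  then obtain g where g: "g \<in> A" "s = abs_R g" by blast
  have "fsmult 1 g = g" by (simp add: fsmult_eq cpoly_one)
  then show ?case using g by (intro exI[of _ "{g}"] exI[of _ "\<lambda>_. 1"]) simp
next
  case (add u v)
  then obtain F1 c1 F2 c2 where u_repr: "F1 \<subseteq> A" "finite F1" "u = abs_R (\<Sum>g\<in>F1. fsmult (c1 g) g)"
    and v_repr: "F2 \<subseteq> A" "finite F2" "v = abs_R (\<Sum>g\<in>F2. fsmult (c2 g) g)" by blast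
  define c where "c g = (if g \<in> F1 then c1 g else 0) + (if g \<in> F2 then c2 g else 0)" for g
  have sum_F1: "(\<Sum>g\<in>F1 \<union> F2. fsmult (if g \<in> F1 then c1 g else 0) g) = (\<Sum>g\<in>F1. fsmult (c1 g) g)"
    by (rule sum.mono_neutral_cong_right) (use u_repr v_repr in \<open>auto simp: fsmult_eq\<close>)
  have sum_F2: "(\<Sum>g\<in>F1 \<union> F2. fsmult (if g \<in> F2 then c2 g else 0) g) = (\<Sum>g\<in>F2. fsmult (c2 g) g)"
    by (rule sum.mono_neutral_cong_right) (use u_repr v_repr in \<open>auto simp: fsmult_eq\<close>)
  have "(\<Sum>g\<in>F1 \<union> F2. fsmult (c g) g) = (\<Sum>g\<in>F1 \<union> F2. fsmult (if g \<in> F1 then c1 g else 0) g)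
      + (\<Sum>g\<in>F1 \<union> F2. fsmult (if g \<in> F2 then c2 g else 0) g)"
    by (simp add: c_def fsmult_eq cpoly_add[symmetric] distrib_right sum.distrib)
  then have "u + v = abs_R (\<Sum>g\<in>F1 \<union> F2. fsmult (c g) g)" using u_repr v_repr sum_F1 sum_F2 by (simp add: abs_add)
  then show ?case using u_repr v_repr by (intro exI[of _ "F1 \<union> F2"] exI[of _ c]) simp
next
  case (scal u d)
  then obtain F c where u_repr: "F \<subseteq> A" "finite F" "u = abs_R (\<Sum>g\<in>F. fsmult (c g) g)" by blast
  have "scal d * u = abs_R (\<Sum>g\<in>F. fsmult (d * c g) g)"
    unfolding u_repr(3) scal_def abs_mult[symmetric]
    by (simp add: fsmult_eq sum_distrib_left mult.assoc[symmetric] cpoly_mult)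
  then show ?case using u_repr by (intro exI[of _ F] exI[of _ "\<lambda>g. d * c g"]) simp
qed

theorem mainTheorem5:
  fixes p :: "'k::field fpoly"
  assumes "infinite (UNIV :: 'k set)"
    and "(2::'k) \<noteq> 0"
    and "p \<in> Y_proper"
  shows "\<exists>F c. F \<subseteq> G_set \<and> finite F \<and>
           p - (\<Sum>g\<in>F. fsmult (c g) g) \<in> I_ideal"
proof -
  have "(abs_R p :: 'k R) \<in> word_span" by (rule Y_proper_in_word_span[OF assms(3)])
  then have "(abs_R p :: 'k R) \<in> kspan (normal_g UNIV)"
    by (rule kspan_subset) (auto intro: word_in_normal_span[OF assms(2)])
  then have "(abs_R p :: 'k R) \<in> kspan (abs_R ` G_set)"
    by (rule kspan_subset) (use normal_g_images kspan.base in blast)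
  then obtain F c where F: "F \<subseteq> G_set" "finite F" "abs_R p = (abs_R (\<Sum>g\<in>F. fsmult (c g) g) :: 'k R)"
    using kspan_images[of "abs_R p" G_set] by auto
  then have "p - (\<Sum>g\<in>F. fsmult (c g) g) \<in> I_ideal" by (simp add: R.abs_eq_iff I_cong_def)
  with F(1,2) show ?thesis by blast
qed

end
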